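(* Consider the stationary M/M/1/K queue (queue length at time $0$ distributed according to the stationary distribution) with arrival rate $\lambda>0$, service rate $\mu>0$, $\rho=\lambda/\mu$ and capacity $K\ge1$, and let $D(t)$ be the number of departures in $[0,t]$. Then $\mathrm{Var}(D(t))=\bar v\,t+\bar b_e+o(1)$ as $t\to\infty$, where $$\bar v=\begin{cases}\lambda\,\dfrac{(1+\rho^{K+1})\big(1-(1+2K)\rho^K(1-\rho)-\rho^{2K+1}\big)}{(1-\rho^{K+1})^3}, & \rho\ne1,\\[1em] \lambda\Big(\dfrac23-\dfrac{3K+2}{3(K+1)^2}\Big), & \rho=1,\end{cases}$$ and $$\bar b_e=\begin{cases}\rho^{K+1}\dfrac{N_K(\rho)}{(1-\rho)^2(1-\rho^{K+1})^4}, & \rho\ne1,\\[1em] \dfrac{7K^4+28K^3+37K^2+18K}{180(K+1)^2}, & \rho=1,\end{cases}$$ with $$N_K(\rho)=\big[6(1+\rho^2)(1+K)^2-4\rho(1+6K+3K^2)\big]\rho^{K+1}+\rho^2(2+3K+K^2)(1+\rho^{2K})-2\rho(3+2K+K^2)(1+\rho^{2(K+1)})+K(1+K)(1+\rho^{2(K+2)}).$$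
   Context: The M/M/1/K queue: a single server, Poisson arrivals at rate $\lambda$, exponential service times with rate $\mu$, and at most $K$ customers in the system (arrivals finding $K$ customers are lost). The queue length $Q(t)$ is the birth–death chain on $\{0,\dots,K\}$ with up-rate $\lambda$ and down-rate $\mu$; its stationary distribution is $\pi_i=\frac{1-\rho}{1-\rho^{K+1}}\rho^i$ for $\rho\ne1$ and $\pi_i=\frac1{K+1}$ for $\rho=1$. $D(t)$ counts the service completions (downward jumps of $Q$) in $[0,t]$. *)

theory Defs
  imports "HOL-Probability.Probability"
begin

definition mm1k_pi :: "real \<Rightarrow> real \<Rightarrow> nat \<Rightarrow> nat \<Rightarrow> real" where
  "mm1k_pi lam mu K i =
     (let \<rho> = lam / mu in
      if i \<le> K then (if \<rho> = 1 then 1 / real (K + 1)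
                     else (1 - \<rho>) / (1 - \<rho> ^ (K + 1)) * \<rho> ^ i)
      else 0)"

definition mm1k_init :: "real \<Rightarrow> real \<Rightarrow> nat \<Rightarrow> nat pmf" where
  "mm1k_init lam mu K = embed_pmf (mm1k_pi lam mu K)"

(* One step of the uniformized jump chain of (Q, D) with uniformization rate lam + mu:
   w.p. lam/(lam+mu) an arrival attempt (lost if Q = K),
   w.p. mu/(lam+mu) a service attempt (a real departure only if Q > 0). *)
definition mm1k_step :: "real \<Rightarrow> real \<Rightarrow> nat \<Rightarrow> nat \<times> nat \<Rightarrow> (nat \<times> nat) pmf" where
  "mm1k_step lam mu K s =
     (case s of (q, d) \<Rightarrow>
       bind_pmf (bernoulli_pmf (lam / (lam + mu)))
         (\<lambda>up. return_pmf
            (if up then (if q < K then (q + 1, d) else (q, d))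
             else (if 0 < q then (q - 1, d + 1) else (q, d)))))"

definition mm1k_jump :: "real \<Rightarrow> real \<Rightarrow> nat \<Rightarrow> nat \<Rightarrow> (nat \<times> nat) pmf" where
  "mm1k_jump lam mu K n =
     ((\<lambda>p. bind_pmf p (mm1k_step lam mu K)) ^^ n) (map_pmf (\<lambda>q. (q, 0)) (mm1k_init lam mu K))"

(* Law of D(t), the number of departures in [0,t] of the stationary M/M/1/K queue:
   the number of epochs in [0,t] is Poisson((lam+mu) t) (uniformization). *)
definition mm1k_departures :: "real \<Rightarrow> real \<Rightarrow> nat \<Rightarrow> real \<Rightarrow> nat pmf" where
  "mm1k_departures lam mu K t =
     bind_pmf (poisson_pmf ((lam + mu) * t)) (\<lambda>n. map_pmf snd (mm1k_jump lam mu K n))"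

definition mm1k_vbar :: "real \<Rightarrow> real \<Rightarrow> nat \<Rightarrow> real" where
  "mm1k_vbar lam mu K =
     (let \<rho> = lam / mu in
      if \<rho> \<noteq> 1 then
        lam * ((1 + \<rho> ^ (K + 1)) * (1 - (1 + 2 * real K) * \<rho> ^ K * (1 - \<rho>) - \<rho> ^ (2 * K + 1)))
          / (1 - \<rho> ^ (K + 1)) ^ 3
      else lam * (2 / 3 - (3 * real K + 2) / (3 * (real K + 1) ^ 2)))"

definition mm1k_N :: "nat \<Rightarrow> real \<Rightarrow> real" where
  "mm1k_N K \<rho> =
     (6 * (1 + \<rho>^2) * (1 + real K)^2 - 4 * \<rho> * (1 + 6 * real K + 3 * (real K)^2)) * \<rho> ^ (K + 1)
     + \<rho>^2 * (2 + 3 * real K + (real K)^2) * (1 + \<rho> ^ (2 * K))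
     - 2 * \<rho> * (3 + 2 * real K + (real K)^2) * (1 + \<rho> ^ (2 * (K + 1)))
     + real K * (1 + real K) * (1 + \<rho> ^ (2 * (K + 2)))"

definition mm1k_be :: "real \<Rightarrow> real \<Rightarrow> nat \<Rightarrow> real" where
  "mm1k_be lam mu K =
     (let \<rho> = lam / mu in
      if \<rho> \<noteq> 1 then
        \<rho> ^ (K + 1) * mm1k_N K \<rho> / ((1 - \<rho>)^2 * (1 - \<rho> ^ (K + 1)) ^ 4)
      else (7 * (real K)^4 + 28 * (real K)^3 + 37 * (real K)^2 + 18 * real K)
             / (180 * (real K + 1)^2))"

end

theory Submission
  imports Defs "HOL-Real_Asymp.Real_Asymp"
begin

(*
  Uniformise at rate lam + mu: D(t) is the number of departures among the first N epochs of a
  discrete-time chain (Q_n, D_n), where N is Poisson((lam + mu) t) and independent of the chain.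
  The queue length Q_n alone is a reversible birth-death chain with transition operator P, started
  in its stationary law pi, and D_n is an additive functional of it. If h and h' solve the Poisson
  equations (I - P) h = g - c and (I - P) h' = g' - c, where g is the probability of a departure
  at the next epoch, g' that of an accepted arrival (its time reversal) and c = pi g, then
  reversibility makes all correlation sums telescope and gives, for an explicit constant alpha,
    E D_n^2 = c^2 n (n - 1) + alpha n - 2 R_0 + 2 R_n,   R_n = pi (h' P^n h).
  A Doeblin minorisation (K services empty the queue) makes R_n converge geometrically to
  pi h' pi h, so after Poissonisation Var D(t) = (lam + mu) alpha t + 2 (pi h' pi h - R_0) plus an
  exponentially small error. The constants are evaluated from explicit solutions h, h':
  combinations of x and (1/rho)^x if rho is not 1, quadratic polynomials in x if rho = 1.
*)

section \<open>Poisson mixtures\<close>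

lemma poisson_pmf_pgf_sums:
  assumes "0 < L"
  shows "(\<lambda>n. b ^ n * pmf (poisson_pmf L) n) sums exp (L * (b - 1))"
proof -
  have "(\<lambda>n. (L * b) ^ n / fact n) sums exp (L * b)"
    using exp_converges[of "L * b"] by (simp add: divide_inverse mult.commute)
  then have "(\<lambda>n. (L * b) ^ n / fact n * exp (- L)) sums (exp (L * b) * exp (- L))"
    by (rule sums_mult2)
  moreover have "b ^ n * pmf (poisson_pmf L) n = (L * b) ^ n / fact n * exp (- L)" for n
    using assms by (simp add: power_mult_distrib)
  ultimately show ?thesis by (simp add: mult_exp_exp right_diff_distrib mult.commute)
qed

lemma poisson_pmf_sums_1: "0 < L \<Longrightarrow> (\<lambda>n. pmf (poisson_pmf L) n) sums 1"
  using poisson_pmf_pgf_sums[of L 1] by simp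

lemma poisson_pmf_Suc:
  "0 < L \<Longrightarrow> real (Suc n) * pmf (poisson_pmf L) (Suc n) = L * pmf (poisson_pmf L) n"
proof -
  assume "0 < L"
  then have "pmf (poisson_pmf L) (Suc n) = L / real (Suc n) * pmf (poisson_pmf L) n"
    by (simp add: divide_simps)
  then show ?thesis by simp
qed

lemma poisson_pmf_mean_sums:
  assumes "0 < L" shows "(\<lambda>n. real n * pmf (poisson_pmf L) n) sums L"
proof -
  have "(\<lambda>n. L * pmf (poisson_pmf L) n) sums (L * 1)"
    by (rule sums_mult) (rule poisson_pmf_sums_1[OF assms])
  then have "(\<lambda>n. real (Suc n) * pmf (poisson_pmf L) (Suc n)) sums L"
    by (simp only: poisson_pmf_Suc[OF assms] mult_1_right)
  then show ?thesis by (subst (asm) sums_Suc_iff) simp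
qed

lemma poisson_pmf_factorial_moment_sums:
  assumes "0 < L" shows "(\<lambda>n. real n * (real n - 1) * pmf (poisson_pmf L) n) sums L ^ 2"
proof -
  have "(\<lambda>n. L ^ 2 * pmf (poisson_pmf L) n) sums (L ^ 2 * 1)"
    by (rule sums_mult) (rule poisson_pmf_sums_1[OF assms])
  moreover have "real (Suc (Suc n)) * (real (Suc (Suc n)) - 1) * pmf (poisson_pmf L) (Suc (Suc n))
      = L ^ 2 * pmf (poisson_pmf L) n" for n
  proof -
    have "real (Suc (Suc n)) * (real (Suc (Suc n)) - 1) * pmf (poisson_pmf L) (Suc (Suc n))
        = real (Suc n) * (real (Suc (Suc n)) * pmf (poisson_pmf L) (Suc (Suc n)))"
      by simp
    also have "\<dots> = L * (real (Suc n) * pmf (poisson_pmf L) (Suc n))"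
      by (simp only: poisson_pmf_Suc[OF assms] mult.left_commute)
    also have "\<dots> = L ^ 2 * pmf (poisson_pmf L) n"
      by (simp only: poisson_pmf_Suc[OF assms] power2_eq_square mult.assoc)
    finally show ?thesis .
  qed
  ultimately have
    "(\<lambda>n. real (Suc (Suc n)) * (real (Suc (Suc n)) - 1) * pmf (poisson_pmf L) (Suc (Suc n))) sums L ^ 2"
    by simp
  then show ?thesis by (subst (asm) sums_Suc_iff, subst (asm) sums_Suc_iff) simp
qed

lemma expectation_bind_pmf_sums:
  fixes N :: "nat pmf" and M :: "nat \<Rightarrow> 'a pmf" and f :: "'a \<Rightarrow> real"
  assumes f_nonneg: "\<And>x. 0 \<le> f x" and M_int: "\<And>n. integrable (M n) f"
    and S: "(\<lambda>n. pmf N n * measure_pmf.expectation (M n) f) sums S"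
  shows "integrable (bind_pmf N M) f" and "measure_pmf.expectation (bind_pmf N M) f = S"
proof -
  have E_nonneg: "0 \<le> measure_pmf.expectation (M n) f" for n
    by (rule integral_nonneg_AE) (simp add: f_nonneg)
  have inner: "(\<integral>\<^sup>+x. f x \<partial>M n) = ennreal (measure_pmf.expectation (M n) f)" for n
    by (rule nn_integral_eq_integral[OF M_int]) (simp add: f_nonneg)
  have "(\<integral>\<^sup>+x. f x \<partial>bind_pmf N M) = (\<integral>\<^sup>+n. ennreal (measure_pmf.expectation (M n) f) \<partial>N)"
    by (simp only: nn_integral_bind_pmf inner)
  also have "\<dots> = (\<integral>\<^sup>+n. ennreal (pmf N n * measure_pmf.expectation (M n) f) \<partial>count_space UNIV)"
    by (simp add: nn_integral_measure_pmf ennreal_mult' E_nonneg)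
  also have "\<dots> = ennreal S"
    using S E_nonneg
    by (simp add: nn_integral_count_space_nat suminf_ennreal2 sums_summable sums_unique[symmetric])
  finally have nn: "(\<integral>\<^sup>+x. f x \<partial>bind_pmf N M) = ennreal S" .
  have "0 \<le> S" using S E_nonneg by (intro sums_le[OF _ sums_zero S]) simp
  then show "integrable (bind_pmf N M) f" "measure_pmf.expectation (bind_pmf N M) f = S"
    using nn f_nonneg by (auto intro: integrableI_nn_integral_finite simp: integral_eq_nn_integral)
qed

lemma poisson_mixture_geometric_bound:
  fixes a :: "nat \<Rightarrow> real"
  assumes "0 < L" and a: "\<And>n. \<bar>a n\<bar> \<le> C * b ^ n"
  shows "summable (\<lambda>n. pmf (poisson_pmf L) n * a n)"
    and "\<bar>\<Sum>n. pmf (poisson_pmf L) n * a n\<bar> \<le> C * exp (L * (b - 1))"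
proof -
  have bound: "norm (pmf (poisson_pmf L) n * a n) \<le> C * (b ^ n * pmf (poisson_pmf L) n)" for n
    using mult_left_mono[OF a pmf_nonneg] by (simp add: abs_mult algebra_simps)
  have S: "(\<lambda>n. C * (b ^ n * pmf (poisson_pmf L) n)) sums (C * exp (L * (b - 1)))"
    by (rule sums_mult) (rule poisson_pmf_pgf_sums[OF assms(1)])
  have norm_summable: "summable (\<lambda>n. norm (pmf (poisson_pmf L) n * a n))"
    using bound by (intro summable_comparison_test'[OF sums_summable[OF S]]) simp
  then show "summable (\<lambda>n. pmf (poisson_pmf L) n * a n)"
    by (rule summable_norm_cancel)
  have "\<bar>\<Sum>n. pmf (poisson_pmf L) n * a n\<bar> \<le> (\<Sum>n. norm (pmf (poisson_pmf L) n * a n))"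
    using summable_norm[OF norm_summable] by simp
  also have "\<dots> \<le> C * exp (L * (b - 1))"
    using suminf_le[OF bound norm_summable sums_summable[OF S]] S by (simp add: sums_iff)
  finally show "\<bar>\<Sum>n. pmf (poisson_pmf L) n * a n\<bar> \<le> C * exp (L * (b - 1))" .
qed

lemma sum_atMost_of_nat: "(\<Sum>x\<le>n. real x) = real n * (real n + 1) / 2"
  using double_gauss_sum[of n, where ?'a = real] by (simp add: atLeast0AtMost)

lemma sum_atMost_power2: "(\<Sum>x\<le>n. real x ^ 2) = real n * (real n + 1) * (2 * real n + 1) / 6"
  by (induction n) (simp_all add: field_simps power2_eq_square)

lemma sum_atMost_power3: "(\<Sum>x\<le>n. real x ^ 3) = (real n * (real n + 1) / 2) ^ 2"
  by (induction n) (simp_all add: field_simps power2_eq_square power3_eq_cube)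

lemma sum_atMost_power4:
  "(\<Sum>x\<le>n. real x ^ 4) = real n * (real n + 1) * (2 * real n + 1) * (3 * real n ^ 2 + 3 * real n - 1) / 30"
  by (induction n) (simp_all add: field_simps power2_eq_square power3_eq_cube eval_nat_numeral)

lemma sum_atMost_mult_power:
  fixes z :: real
  shows "(1 - z) ^ 2 * (\<Sum>x\<le>n. real x * z ^ x) = z - (real n + 1) * z ^ (n + 1) + real n * z ^ (n + 2)"
  by (induction n) (simp_all add: power_add eval_nat_numeral algebra_simps)

lemma sum_atMost_power2_mult_power:
  fixes z :: real
  shows "(1 - z) ^ 3 * (\<Sum>x\<le>n. real x ^ 2 * z ^ x) = z * (1 + z) - (real n + 1) ^ 2 * z ^ (n + 1)
     + (2 * real n ^ 2 + 2 * real n - 1) * z ^ (n + 2) - real n ^ 2 * z ^ (n + 3)"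
  by (induction n) (simp_all add: power_add eval_nat_numeral algebra_simps)

section \<open>The uniformised queue-length chain\<close>

locale mm1k =
  fixes lam mu :: real and K :: nat
  assumes lam_pos: "0 < lam" and mu_pos: "0 < mu" and K_pos: "1 \<le> K"
begin

definition "\<rho> = lam / mu"
definition "p = lam / (lam + mu)"
definition "q = mu / (lam + mu)"
definition "\<pi> = mm1k_pi lam mu K"

lemma rho_pos: "0 < \<rho>"
  using lam_pos mu_pos by (simp add: \<rho>_def)

lemma p_pos: "0 < p"
  using lam_pos mu_pos by (simp add: p_def)

lemma q_pos: "0 < q"
  using lam_pos mu_pos by (simp add: q_def)

lemma p_plus_q: "p + q = 1"
  using lam_pos mu_pos by (simp add: p_def q_def add_divide_distrib[symmetric])

lemma q_eq: "q = 1 / (1 + \<rho>)"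
  using lam_pos mu_pos by (simp add: q_def \<rho>_def field_simps)

lemma p_eq: "p = \<rho> / (1 + \<rho>)"
  using lam_pos mu_pos by (simp add: p_def \<rho>_def field_simps)

lemma q_eq_1_minus_p: "q = 1 - p"
  using p_plus_q by simp

lemma p_eq_rho_q: "p = \<rho> * q"
  by (simp add: p_eq q_eq)

lemma lam_plus_mu_eq: "lam + mu = mu * (1 + \<rho>)"
  using mu_pos by (simp add: \<rho>_def field_simps)

lemma pi_eq: "\<pi> x = (if x \<le> K then \<rho> ^ x / (\<Sum>i\<le>K. \<rho> ^ i) else 0)"
proof (cases "\<rho> = 1")
  case False
  have "1 - \<rho> ^ Suc K = (1 - \<rho>) * (\<Sum>i\<le>K. \<rho> ^ i)"
    by (simp only: one_diff_power_eq lessThan_Suc_atMost)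
  with False show ?thesis
    by (simp add: \<pi>_def mm1k_pi_def \<rho>_def[symmetric] Let_def)
qed (simp add: \<pi>_def mm1k_pi_def \<rho>_def[symmetric])

lemma pi_nonneg: "0 \<le> \<pi> x"
  using rho_pos by (simp add: pi_eq sum_nonneg)

lemma pi_sum: "(\<Sum>x\<le>K. \<pi> x) = 1"
proof -
  have "0 < (\<Sum>i\<le>K. \<rho> ^ i)"
    using rho_pos by (intro sum_pos) auto
  then show ?thesis
    by (simp add: pi_eq sum_divide_distrib[symmetric])
qed

lemma pi_detailed_balance: "x < K \<Longrightarrow> \<pi> (Suc x) * q = \<pi> x * p"
  by (simp add: pi_eq p_eq_rho_q)

lemma pmf_mm1k_init: "pmf (mm1k_init lam mu K) x = \<pi> x"
proof -
  have "(\<integral>\<^sup>+x. ennreal (\<pi> x) \<partial>count_space UNIV) = (\<Sum>x\<le>K. ennreal (\<pi> x))"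
    by (rule nn_integral_count_space') (auto simp: pi_eq)
  also have "\<dots> = 1"
    using pi_nonneg by (simp add: sum_ennreal pi_sum)
  finally show ?thesis
    unfolding mm1k_init_def \<pi>_def[symmetric] by (rule pmf_embed_pmf[OF pi_nonneg])
qed

lemma set_pmf_mm1k_init: "set_pmf (mm1k_init lam mu K) \<subseteq> {..K}"
  by (auto simp: set_pmf_iff pmf_mm1k_init pi_eq split: if_splits)

definition arrive :: "nat \<Rightarrow> nat" where
  "arrive x = (if x < K then x + 1 else x)"

(* Transition operator of the queue length at the uniformisation epochs; x - 1 truncates at 0,
   so a service epoch at an empty queue is a self-loop. *)
definition P :: "(nat \<Rightarrow> real) \<Rightarrow> nat \<Rightarrow> real" where
  "P f x = p * f (arrive x) + q * f (x - 1)"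

definition pi_mean :: "(nat \<Rightarrow> real) \<Rightarrow> real" where
  "pi_mean f = (\<Sum>x\<le>K. \<pi> x * f x)"

definition depart_prob :: "nat \<Rightarrow> real" where
  "depart_prob x = (if 0 < x then q else 0)"

definition arrive_prob :: "nat \<Rightarrow> real" where
  "arrive_prob x = (if x < K then p else 0)"

definition P_depart :: "(nat \<Rightarrow> real) \<Rightarrow> nat \<Rightarrow> real" where
  "P_depart f x = (if 0 < x then q * f (x - 1) else 0)"

definition "depart_rate = pi_mean depart_prob"

lemma arrive_le: "x \<le> K \<Longrightarrow> arrive x \<le> K"
  by (simp add: arrive_def)

lemma depart_prob_eq: "depart_prob x = q * (1 - of_bool (x = 0))"
  by (simp add: depart_prob_def)

lemma arrive_prob_eq: "x \<le> K \<Longrightarrow> arrive_prob x = p * (1 - of_bool (x = K))"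
  by (simp add: arrive_prob_def)

lemma P_cong: "(\<And>y. y \<le> K \<Longrightarrow> f y = f' y) \<Longrightarrow> x \<le> K \<Longrightarrow> P f x = P f' x"
  by (simp add: P_def arrive_le)

lemma P_add: "P (\<lambda>y. f y + f' y) x = P f x + P f' x"
  by (simp add: P_def algebra_simps)

lemma P_diff: "P (\<lambda>y. f y - f' y) x = P f x - P f' x"
  by (simp add: P_def algebra_simps)

lemma P_minus: "P (\<lambda>y. - f y) x = - P f x"
  by (simp add: P_def algebra_simps)

lemma P_cmult: "P (\<lambda>y. a * f y) x = a * P f x"
  by (simp add: P_def algebra_simps)

lemma P_divide: "P (\<lambda>y. f y / a) x = P f x / a"
  by (simp add: P_def add_divide_distrib)

lemma P_const: "P (\<lambda>_. b) = (\<lambda>_. b)"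
  by (simp add: fun_eq_iff P_def q_eq_1_minus_p algebra_simps)

lemma P_iter_const: "(P ^^ n) (\<lambda>_. b) = (\<lambda>_. b)"
  by (induction n) (simp_all add: P_const)

lemma P_nonneg: "(\<And>y. y \<le> K \<Longrightarrow> 0 \<le> f y) \<Longrightarrow> x \<le> K \<Longrightarrow> 0 \<le> P f x"
  using p_pos q_pos by (simp add: P_def arrive_le)

lemma P_of_nat: "P real x = real x + arrive_prob x - depart_prob x"
  by (auto simp: P_def arrive_def arrive_prob_def depart_prob_def q_eq_1_minus_p algebra_simps)

lemma P_power2:
  "P (\<lambda>y. real y ^ 2) x = real x ^ 2 + (2 * real x + 1) * arrive_prob x - (2 * real x - 1) * depart_prob x"
  by (auto simp: P_def arrive_def arrive_prob_def depart_prob_def q_eq_1_minus_p of_nat_diff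
      power2_eq_square algebra_simps)

lemma P_inverse_power:
  assumes "x \<le> K"
  shows "P (\<lambda>y. (1 / \<rho>) ^ y) x = (1 / \<rho>) ^ x * (1 + (p - q) * (of_bool (x = K) - of_bool (x = 0)))"
proof -
  define \<sigma> where "\<sigma> = 1 / \<rho>"
  have shift: "p * \<sigma> ^ Suc y = q * \<sigma> ^ y" for y
    using rho_pos by (simp add: \<sigma>_def p_eq_rho_q)
  have shift': "q * \<sigma> ^ (y - 1) = p * \<sigma> ^ y" if "0 < y" for y
    using shift[of "y - 1"] that by simp
  consider "x = 0" | "x = K" | "0 < x" "x < K"
    using assms by linarith
  then have "P (\<lambda>y. \<sigma> ^ y) x = \<sigma> ^ x * (1 + (p - q) * (of_bool (x = K) - of_bool (x = 0)))"
  proof cases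
    case 1
    then show ?thesis
      using K_pos shift[of 0] by (simp add: P_def arrive_def q_eq_1_minus_p)
  next
    case 2
    then have "P (\<lambda>y. \<sigma> ^ y) x = p * \<sigma> ^ x + p * \<sigma> ^ x"
      using K_pos shift'[of K] by (simp add: P_def arrive_def)
    then show ?thesis
      using 2 K_pos by (simp add: q_eq_1_minus_p algebra_simps)
  next
    case 3
    then have "P (\<lambda>y. \<sigma> ^ y) x = q * \<sigma> ^ x + p * \<sigma> ^ x"
      using shift[of x] shift'[of x] by (simp add: P_def arrive_def)
    then show ?thesis
      using 3 by (simp add: q_eq_1_minus_p algebra_simps)
  qed
  then show ?thesis by (simp only: \<sigma>_def)
qed

lemma pi_mean_cong: "(\<And>x. x \<le> K \<Longrightarrow> f x = f' x) \<Longrightarrow> pi_mean f = pi_mean f'"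
  by (simp add: pi_mean_def)

lemma pi_mean_add: "pi_mean (\<lambda>x. f x + f' x) = pi_mean f + pi_mean f'"
  by (simp add: pi_mean_def sum.distrib algebra_simps)

lemma pi_mean_diff: "pi_mean (\<lambda>x. f x - f' x) = pi_mean f - pi_mean f'"
  by (simp add: pi_mean_def sum_subtractf algebra_simps)

lemma pi_mean_cmult: "pi_mean (\<lambda>x. a * f x) = a * pi_mean f"
  by (simp add: pi_mean_def sum_distrib_left algebra_simps)

lemma pi_mean_divide: "pi_mean (\<lambda>x. f x / a) = pi_mean f / a"
  by (simp add: pi_mean_def sum_divide_distrib)

lemma pi_mean_const: "pi_mean (\<lambda>_. a) = a"
  by (simp add: pi_mean_def sum_distrib_right[symmetric] pi_sum)

lemma abs_pi_mean_le: "(\<And>x. x \<le> K \<Longrightarrow> \<bar>f x\<bar> \<le> g x) \<Longrightarrow> \<bar>pi_mean f\<bar> \<le> pi_mean g"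
  unfolding pi_mean_def
  by (rule order.trans[OF sum_abs sum_mono]) (simp add: abs_mult pi_nonneg mult_left_mono)

lemma pi_mean_abs_nonneg: "0 \<le> pi_mean (\<lambda>x. \<bar>f x\<bar>)"
  by (simp add: pi_mean_def sum_nonneg pi_nonneg)

lemma sum_atMost_K_shift: "(\<Sum>x\<le>K. F x) = F 0 + (\<Sum>x<K. F (Suc x))"
proof -
  obtain k where "K = Suc k" using K_pos by (cases K) auto
  then show ?thesis by (simp only: sum.atMost_Suc_shift lessThan_Suc_atMost)
qed

(* The right-hand side is symmetric in a and b: this is reversibility of P. *)
lemma pi_mean_mult_P:
  "pi_mean (\<lambda>x. a x * P b x) =
     (\<Sum>x<K. \<pi> x * p * (a x * b (Suc x) + a (Suc x) * b x))
     + \<pi> K * p * a K * b K + \<pi> 0 * q * a 0 * b 0"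
proof -
  have arrivals: "(\<Sum>x\<le>K. \<pi> x * a x * p * b (arrive x))
      = (\<Sum>x<K. \<pi> x * p * (a x * b (Suc x))) + \<pi> K * p * a K * b K"
    by (simp add: lessThan_Suc_atMost[symmetric] arrive_def algebra_simps)
  have "(\<Sum>x\<le>K. \<pi> x * a x * q * b (x - 1))
      = \<pi> 0 * q * a 0 * b 0 + (\<Sum>x<K. \<pi> (Suc x) * q * (a (Suc x) * b x))"
    by (simp add: sum_atMost_K_shift algebra_simps)
  also have "(\<Sum>x<K. \<pi> (Suc x) * q * (a (Suc x) * b x)) = (\<Sum>x<K. \<pi> x * p * (a (Suc x) * b x))"
    by (intro sum.cong refl) (simp add: pi_detailed_balance)
  finally have services: "(\<Sum>x\<le>K. \<pi> x * a x * q * b (x - 1))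
      = \<pi> 0 * q * a 0 * b 0 + (\<Sum>x<K. \<pi> x * p * (a (Suc x) * b x))" .
  have "pi_mean (\<lambda>x. a x * P b x)
      = (\<Sum>x\<le>K. \<pi> x * a x * p * b (arrive x)) + (\<Sum>x\<le>K. \<pi> x * a x * q * b (x - 1))"
    by (simp add: pi_mean_def P_def sum.distrib algebra_simps)
  then show ?thesis
    unfolding arrivals services by (simp add: sum.distrib algebra_simps)
qed

lemma pi_mean_P_self_adjoint: "pi_mean (\<lambda>x. a x * P b x) = pi_mean (\<lambda>x. P a x * b x)"
  using pi_mean_mult_P[of a b] pi_mean_mult_P[of b a] by (simp add: mult.commute add.commute)

lemma pi_mean_P: "pi_mean (P f) = pi_mean f"
  using pi_mean_P_self_adjoint[of "\<lambda>_. 1" f] by (simp add: P_const)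

lemma pi_mean_P_iter: "pi_mean ((P ^^ n) f) = pi_mean f"
  by (induction n) (simp_all add: pi_mean_P)

lemma pi_mean_mult_depart_prob: "pi_mean (\<lambda>x. f x * depart_prob x) = q * (pi_mean f - \<pi> 0 * f 0)"
  by (simp add: pi_mean_def sum_atMost_K_shift depart_prob_def sum_distrib_left algebra_simps)

lemma depart_rate_eq: "depart_rate = q * (1 - \<pi> 0)"
  using pi_mean_mult_depart_prob[of "\<lambda>_. 1"] by (simp add: depart_rate_def pi_mean_const)

(* Under time reversal a departure from x + 1 becomes an accepted arrival at x. *)
lemma pi_mean_P_depart: "pi_mean (P_depart f) = pi_mean (\<lambda>x. arrive_prob x * f x)"
proof -
  have "pi_mean (P_depart f) = (\<Sum>x<K. \<pi> (Suc x) * q * f x)"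
    by (simp add: pi_mean_def sum_atMost_K_shift P_depart_def algebra_simps)
  also have "\<dots> = (\<Sum>x<K. \<pi> x * p * f x)"
    by (intro sum.cong refl) (simp add: pi_detailed_balance)
  also have "\<dots> = pi_mean (\<lambda>x. arrive_prob x * f x)"
    by (simp add: pi_mean_def arrive_prob_def lessThan_Suc_atMost[symmetric] algebra_simps)
  finally show ?thesis .
qed

section \<open>Departures along the jump chain\<close>

definition step_op :: "(nat \<times> nat \<Rightarrow> real) \<Rightarrow> nat \<times> nat \<Rightarrow> real" where
  "step_op F = (\<lambda>(x, d). p * F (arrive x, d) + q * (if 0 < x then F (x - 1, d + 1) else F (x, d)))"

definition jump_exp :: "nat \<Rightarrow> (nat \<times> nat \<Rightarrow> real) \<Rightarrow> real" where
  "jump_exp n F = measure_pmf.expectation (mm1k_jump lam mu K n) F"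

lemma mm1k_step_eq:
  "mm1k_step lam mu K (x, d) =
     map_pmf (\<lambda>b. if b then (if x < K then (x + 1, d) else (x, d))
                    else (if 0 < x then (x - 1, d + 1) else (x, d))) (bernoulli_pmf p)"
  by (simp add: mm1k_step_def map_pmf_def p_def)

lemma expectation_mm1k_step: "measure_pmf.expectation (mm1k_step lam mu K s) F = step_op F s"
proof -
  obtain x d where "s = (x, d)" by (cases s)
  moreover have "p \<le> 1" using p_plus_q q_pos by linarith
  ultimately show ?thesis
    using p_pos by (simp add: mm1k_step_eq step_op_def arrive_def q_eq_1_minus_p mult.commute)
qed

lemma set_pmf_mm1k_step:
  "s \<in> {..K} \<times> {..n} \<Longrightarrow> set_pmf (mm1k_step lam mu K s) \<subseteq> {..K} \<times> {..Suc n}"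
  by (cases s) (auto simp: mm1k_step_eq)

lemma mm1k_jump_0: "mm1k_jump lam mu K 0 = map_pmf (\<lambda>x. (x, 0)) (mm1k_init lam mu K)"
  by (simp add: mm1k_jump_def)

lemma mm1k_jump_Suc: "mm1k_jump lam mu K (Suc n) = bind_pmf (mm1k_jump lam mu K n) (mm1k_step lam mu K)"
  by (simp add: mm1k_jump_def)

lemma set_pmf_mm1k_jump: "set_pmf (mm1k_jump lam mu K n) \<subseteq> {..K} \<times> {..n}"
proof (induction n)
  case 0
  show ?case
    unfolding mm1k_jump_0 set_map_pmf using set_pmf_mm1k_init by blast
next
  case (Suc n)
  show ?case
    unfolding mm1k_jump_Suc set_bind_pmf
    by (intro UN_least) (use Suc.IH set_pmf_mm1k_step in blast)
qed

lemma jump_exp_eq_sum: "jump_exp n F = (\<Sum>s\<in>{..K} \<times> {..n}. pmf (mm1k_jump lam mu K n) s * F s)"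
  unfolding jump_exp_def using set_pmf_mm1k_jump by (subst integral_measure_pmf) auto

lemma jump_exp_0: "jump_exp 0 F = pi_mean (\<lambda>x. F (x, 0))"
proof -
  have "jump_exp 0 F = measure_pmf.expectation (mm1k_init lam mu K) (\<lambda>x. F (x, 0))"
    by (simp add: jump_exp_def mm1k_jump_0)
  also have "\<dots> = pi_mean (\<lambda>x. F (x, 0))"
    using set_pmf_mm1k_init by (subst integral_measure_pmf[of "{..K}"]) (auto simp: pmf_mm1k_init pi_mean_def)
  finally show ?thesis .
qed

lemma jump_exp_Suc: "jump_exp (Suc n) F = jump_exp n (step_op F)"
proof -
  have "jump_exp (Suc n) F = (\<Sum>s\<in>{..K} \<times> {..n}. pmf (mm1k_jump lam mu K n) s *\<^sub>R
           measure_pmf.expectation (mm1k_step lam mu K s) F)"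
    unfolding jump_exp_def mm1k_jump_Suc
    by (rule pmf_expectation_bind) (simp_all add: set_pmf_mm1k_jump finite_subset[OF set_pmf_mm1k_step])
  also have "\<dots> = jump_exp n (step_op F)"
    by (simp only: jump_exp_eq_sum expectation_mm1k_step real_scaleR_def)
  finally show ?thesis .
qed

lemma jump_exp_add: "jump_exp n (\<lambda>s. F s + F' s) = jump_exp n F + jump_exp n F'"
  by (simp add: jump_exp_eq_sum sum.distrib algebra_simps)

lemma jump_exp_cmult: "jump_exp n (\<lambda>s. a * F s) = a * jump_exp n F"
  by (simp add: jump_exp_eq_sum sum_distrib_left algebra_simps)

lemma step_op_queue: "step_op (\<lambda>s. f (fst s)) = (\<lambda>s. P f (fst s))"
  by (simp add: fun_eq_iff step_op_def P_def)

lemma step_op_departures_mult: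
  "step_op (\<lambda>s. real (snd s) * f (fst s)) = (\<lambda>s. real (snd s) * P f (fst s) + P_depart f (fst s))"
  by (simp add: fun_eq_iff step_op_def P_def P_depart_def algebra_simps)

lemma step_op_departures_sq:
  "step_op (\<lambda>s. real (snd s) ^ 2)
     = (\<lambda>s. real (snd s) ^ 2 + 2 * (real (snd s) * depart_prob (fst s)) + depart_prob (fst s))"
  by (simp add: fun_eq_iff step_op_def depart_prob_def q_eq_1_minus_p power2_eq_square algebra_simps)

lemma jump_exp_queue: "jump_exp n (\<lambda>s. f (fst s)) = pi_mean f"
  by (induction n arbitrary: f) (simp_all add: jump_exp_0 jump_exp_Suc step_op_queue pi_mean_P)

lemma jump_exp_departures_mult:
  "jump_exp n (\<lambda>s. real (snd s) * f (fst s)) = (\<Sum>j<n. pi_mean (P_depart ((P ^^ j) f)))"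
proof (induction n arbitrary: f)
  case 0
  then show ?case by (simp add: jump_exp_0 pi_mean_def)
next
  case (Suc n)
  have "jump_exp (Suc n) (\<lambda>s. real (snd s) * f (fst s))
      = jump_exp n (\<lambda>s. real (snd s) * P f (fst s)) + pi_mean (P_depart f)"
    by (simp add: jump_exp_Suc step_op_departures_mult jump_exp_add jump_exp_queue)
  also have "\<dots> = (\<Sum>j<n. pi_mean (P_depart ((P ^^ Suc j) f))) + pi_mean (P_depart f)"
    by (simp add: Suc funpow_Suc_right del: funpow.simps)
  also have "\<dots> = (\<Sum>j<Suc n. pi_mean (P_depart ((P ^^ j) f)))"
    by (simp only: sum.lessThan_Suc_shift funpow_0 add.commute)
  finally show ?case .
qed

lemma jump_exp_departures: "jump_exp n (\<lambda>s. real (snd s)) = real n * depart_rate"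
proof -
  have "P_depart (\<lambda>_. 1) = depart_prob"
    by (simp add: fun_eq_iff P_depart_def depart_prob_def)
  then show ?thesis
    using jump_exp_departures_mult[of n "\<lambda>_. 1"] by (simp add: P_iter_const depart_rate_def)
qed

lemma jump_exp_departures_sq_Suc:
  "jump_exp (Suc n) (\<lambda>s. real (snd s) ^ 2)
     = jump_exp n (\<lambda>s. real (snd s) ^ 2) + 2 * jump_exp n (\<lambda>s. real (snd s) * depart_prob (fst s))
       + depart_rate"
  by (simp add: jump_exp_Suc step_op_departures_sq jump_exp_add jump_exp_cmult jump_exp_queue depart_rate_def)

lemma expectation_mm1k_departures:
  fixes f :: "nat \<Rightarrow> real"
  assumes "\<And>d. 0 \<le> f d"
    and "(\<lambda>n. pmf (poisson_pmf ((lam + mu) * t)) n * jump_exp n (\<lambda>s. f (snd s))) sums S"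
  shows "integrable (mm1k_departures lam mu K t) f"
    and "measure_pmf.expectation (mm1k_departures lam mu K t) f = S"
proof -
  let ?M = "\<lambda>n. map_pmf snd (mm1k_jump lam mu K n)"
  have "integrable (?M n) f" for n
    using finite_subset[OF set_pmf_mm1k_jump] by (intro integrable_measure_pmf_finite) simp
  moreover have "(\<lambda>n. pmf (poisson_pmf ((lam + mu) * t)) n * measure_pmf.expectation (?M n) f) sums S"
    using assms(2) by (simp add: jump_exp_def)
  ultimately show "integrable (mm1k_departures lam mu K t) f"
    and "measure_pmf.expectation (mm1k_departures lam mu K t) f = S"
    unfolding mm1k_departures_def by (rule expectation_bind_pmf_sums[OF assms(1)])+
qed

lemma mean_mm1k_departures:
  assumes "0 < t"
  shows "integrable (mm1k_departures lam mu K t) real"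
    and "measure_pmf.expectation (mm1k_departures lam mu K t) real = depart_rate * ((lam + mu) * t)"
proof -
  have "0 < (lam + mu) * t"
    using assms lam_pos mu_pos by simp
  then have "(\<lambda>n. depart_rate * (real n * pmf (poisson_pmf ((lam + mu) * t)) n))
      sums (depart_rate * ((lam + mu) * t))"
    by (intro sums_mult poisson_pmf_mean_sums)
  then have "(\<lambda>n. pmf (poisson_pmf ((lam + mu) * t)) n * jump_exp n (\<lambda>s. real (snd s)))
      sums (depart_rate * ((lam + mu) * t))"
    by (simp add: jump_exp_departures algebra_simps)
  then show "integrable (mm1k_departures lam mu K t) real"
    and "measure_pmf.expectation (mm1k_departures lam mu K t) real = depart_rate * ((lam + mu) * t)"
    by (simp_all add: expectation_mm1k_departures)
qed

section \<open>Geometric ergodicity\<close>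

lemma P_iter_nonneg: "(\<And>y. y \<le> K \<Longrightarrow> 0 \<le> f y) \<Longrightarrow> x \<le> K \<Longrightarrow> 0 \<le> (P ^^ n) f x"
  by (induction n arbitrary: x) (simp_all add: P_nonneg)

lemma P_iter_affine: "(P ^^ n) (\<lambda>y. a * f y + b) = (\<lambda>x. a * (P ^^ n) f x + b)"
proof (induction n)
  case (Suc n)
  show ?case by (simp add: Suc.IH fun_eq_iff P_add P_cmult P_const)
qed simp

(* Doeblin minorisation: from x, x consecutive service epochs empty the queue. *)
lemma P_iter_ge_empty:
  assumes f_nonneg: "\<And>y. y \<le> K \<Longrightarrow> 0 \<le> f y"
  shows "x \<le> K \<Longrightarrow> x \<le> n \<Longrightarrow> q ^ n * f 0 \<le> (P ^^ n) f x"
proof (induction n arbitrary: x)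
  case (Suc n)
  have "q * (q ^ n * f 0) \<le> q * (P ^^ n) f (x - 1)"
    using Suc q_pos by (intro mult_left_mono) auto
  moreover have "0 \<le> p * (P ^^ n) f (arrive x)"
    using Suc.prems p_pos by (simp add: P_iter_nonneg f_nonneg arrive_le)
  moreover have "(P ^^ Suc n) f x = p * (P ^^ n) f (arrive x) + q * (P ^^ n) f (x - 1)"
    using P_def[of "(P ^^ n) f" x] by simp
  ultimately show ?case by simp
qed simp

definition osc_le :: "(nat \<Rightarrow> real) \<Rightarrow> real \<Rightarrow> bool" where
  "osc_le f s \<longleftrightarrow> (\<forall>x\<le>K. \<forall>y\<le>K. f x - f y \<le> s)"

lemma osc_le_sum_abs: "osc_le f (2 * (\<Sum>z\<le>K. \<bar>f z\<bar>))"
proof -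
  have "\<bar>f x\<bar> \<le> (\<Sum>z\<le>K. \<bar>f z\<bar>)" if "x \<le> K" for x
    using that by (intro member_le_sum) auto
  then show ?thesis
    unfolding osc_le_def by (smt (verit))
qed

lemma osc_le_P: "osc_le f s \<Longrightarrow> osc_le (P f) s"
  unfolding osc_le_def
proof (intro allI impI)
  fix x y assume f: "\<forall>x\<le>K. \<forall>y\<le>K. f x - f y \<le> s" and "x \<le> K" "y \<le> K"
  then have "f (arrive x) - f (arrive y) \<le> s" and "f (x - 1) - f (y - 1) \<le> s"
    by (simp_all add: arrive_le)
  then have "p * (f (arrive x) - f (arrive y)) + q * (f (x - 1) - f (y - 1)) \<le> p * s + q * s"
    using p_pos q_pos by (intro add_mono mult_left_mono) auto
  then show "P f x - P f y \<le> s"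
    by (simp add: P_def q_eq_1_minus_p algebra_simps)
qed

lemma osc_le_P_iter_K:
  assumes "osc_le f s"
  shows "osc_le ((P ^^ K) f) ((1 - q ^ K) * s)"
  unfolding osc_le_def
proof (intro allI impI)
  fix x y assume "x \<le> K" "y \<le> K"
  define M where "M = Max (f ` {..K})"
  define m where "m = Min (f ` {..K})"
  have M: "\<And>z. z \<le> K \<Longrightarrow> f z \<le> M" and m: "\<And>z. z \<le> K \<Longrightarrow> m \<le> f z"
    by (simp_all add: M_def m_def)
  have "M \<in> f ` {..K}" "m \<in> f ` {..K}"
    unfolding M_def m_def by (intro Max_in Min_in; simp)+
  then have "M - m \<le> s"
    using assms by (auto simp: osc_le_def)
  have "q ^ K * (- 1 * f 0 + M) \<le> (P ^^ K) (\<lambda>z. - 1 * f z + M) x"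
    using M \<open>x \<le> K\<close> by (intro P_iter_ge_empty) auto
  moreover have "q ^ K * (1 * f 0 + - m) \<le> (P ^^ K) (\<lambda>z. 1 * f z + - m) y"
    using m \<open>y \<le> K\<close> by (intro P_iter_ge_empty) auto
  ultimately have "(P ^^ K) f x - (P ^^ K) f y \<le> (1 - q ^ K) * (M - m)"
    unfolding P_iter_affine by (simp add: algebra_simps)
  also have "\<dots> \<le> (1 - q ^ K) * s"
    using \<open>M - m \<le> s\<close> q_pos p_plus_q p_pos
    by (intro mult_left_mono) (auto simp: power_le_one)
  finally show "(P ^^ K) f x - (P ^^ K) f y \<le> (1 - q ^ K) * s" .
qed

lemma osc_le_P_iter:
  assumes "osc_le f s"
  shows "osc_le ((P ^^ n) f) ((1 - q ^ K) ^ (n div K) * s)"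
proof -
  have "osc_le ((P ^^ (k * K + j)) f) ((1 - q ^ K) ^ k * s)" for k j
  proof (induction k)
    case 0
    show ?case
      using assms by (induction j) (simp_all add: osc_le_P)
  next
    case (Suc k)
    have "(P ^^ (Suc k * K + j)) f = (P ^^ K) ((P ^^ (k * K + j)) f)"
      by (simp add: funpow_add add.assoc)
    then show ?case
      using osc_le_P_iter_K[OF Suc] by (simp add: mult.assoc)
  qed
  from this[of "n div K" "n mod K"] show ?thesis by simp
qed

lemma osc_le_pi_mean:
  assumes "osc_le f s" and "x \<le> K"
  shows "\<bar>f x - pi_mean f\<bar> \<le> s"
proof -
  have "f x - pi_mean f = pi_mean (\<lambda>y. f x - f y)"
    by (simp add: pi_mean_diff pi_mean_const)
  moreover have "\<bar>pi_mean (\<lambda>y. f x - f y)\<bar> \<le> pi_mean (\<lambda>_. s)"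
    using assms by (intro abs_pi_mean_le) (auto simp: osc_le_def abs_le_iff)
  ultimately show ?thesis by (simp add: pi_mean_const)
qed

definition "\<beta> = root K (1 - q ^ K)"

lemma contraction_bounds: "0 < 1 - q ^ K" "1 - q ^ K < 1"
  using q_pos p_pos p_plus_q K_pos by (simp_all add: power_less_one_iff)

lemma beta_bounds: "0 < \<beta>" "\<beta> < 1" "\<beta> ^ K = 1 - q ^ K"
  using contraction_bounds K_pos by (simp_all add: \<beta>_def real_root_pow_pos2)

lemma contraction_power_le: "(1 - q ^ K) ^ (n div K) \<le> \<beta> ^ n / (1 - q ^ K)"
proof -
  have "n \<le> K * (n div K) + K"
    using K_pos mod_less_divisor[of K n] mult_div_mod_eq[of K n] by linarith
  then have "\<beta> ^ (K * (n div K) + K) \<le> \<beta> ^ n"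
    using beta_bounds by (intro power_decreasing) auto
  then show ?thesis
    using beta_bounds contraction_bounds by (simp add: power_add power_mult field_simps)
qed

lemma P_iter_converges_geometrically:
  obtains C where "0 \<le> C" and "\<And>n x. x \<le> K \<Longrightarrow> \<bar>(P ^^ n) f x - pi_mean f\<bar> \<le> C * \<beta> ^ n"
proof
  define s where "s = 2 * (\<Sum>z\<le>K. \<bar>f z\<bar>)"
  show "0 \<le> s / (1 - q ^ K)"
    using contraction_bounds by (simp add: s_def sum_nonneg)
  fix n x assume "x \<le> K"
  have "\<bar>(P ^^ n) f x - pi_mean f\<bar> \<le> (1 - q ^ K) ^ (n div K) * s"
    using osc_le_pi_mean[OF osc_le_P_iter[OF osc_le_sum_abs] \<open>x \<le> K\<close>]
    by (simp add: pi_mean_P_iter s_def)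
  also have "\<dots> \<le> \<beta> ^ n / (1 - q ^ K) * s"
    using contraction_power_le by (rule mult_right_mono) (simp add: s_def sum_nonneg)
  finally show "\<bar>(P ^^ n) f x - pi_mean f\<bar> \<le> s / (1 - q ^ K) * \<beta> ^ n"
    by (simp add: field_simps)
qed

end

section \<open>The variance via solutions of the Poisson equations\<close>

(* (lam + mu) * alpha and bias below turn out to be vbar and b_e of the statement. *)
locale mm1k_poisson = mm1k +
  fixes h h' :: "nat \<Rightarrow> real"
  assumes poisson_h: "\<And>x. x \<le> K \<Longrightarrow> h x - P h x = depart_prob x - depart_rate"
    and poisson_h': "\<And>x. x \<le> K \<Longrightarrow> h' x - P h' x = arrive_prob x - depart_rate"
begin

definition R :: "nat \<Rightarrow> real" where
  "R n = pi_mean (\<lambda>x. h' x * (P ^^ n) h x)"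

definition "\<alpha> = depart_rate + 2 * pi_mean (\<lambda>x. h' x * depart_prob x) - 2 * depart_rate * pi_mean h'"

definition "bias = 2 * (pi_mean h' * pi_mean h - R 0)"

lemma pi_mean_arrive_prob_mult:
  "pi_mean (\<lambda>x. arrive_prob x * f x)
     = depart_rate * pi_mean f + pi_mean (\<lambda>x. h' x * f x) - pi_mean (\<lambda>x. h' x * P f x)"
proof -
  have "pi_mean (\<lambda>x. arrive_prob x * f x)
      = pi_mean (\<lambda>x. depart_rate * f x + h' x * f x - P h' x * f x)"
  proof (rule pi_mean_cong)
    fix x assume "x \<le> K"
    then have "arrive_prob x = depart_rate + h' x - P h' x"
      using poisson_h'[of x] by linarith
    then show "arrive_prob x * f x = depart_rate * f x + h' x * f x - P h' x * f x"
      by (simp add: left_diff_distrib distrib_right)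
  qed
  also have "\<dots> = depart_rate * pi_mean f + pi_mean (\<lambda>x. h' x * f x) - pi_mean (\<lambda>x. P h' x * f x)"
    by (simp add: pi_mean_diff pi_mean_add pi_mean_cmult)
  finally show ?thesis
    by (simp add: pi_mean_P_self_adjoint)
qed

lemma P_iter_depart_prob:
  "x \<le> K \<Longrightarrow> (P ^^ n) depart_prob x = depart_rate + (P ^^ n) h x - (P ^^ Suc n) h x"
proof (induction n arbitrary: x)
  case 0
  then have "h x - P h x = depart_prob x - depart_rate" by (rule poisson_h)
  then show ?case by simp
next
  case (Suc n)
  have "(P ^^ Suc n) depart_prob x = P ((P ^^ n) depart_prob) x"
    by simp
  also have "\<dots> = P (\<lambda>y. depart_rate + (P ^^ n) h y - (P ^^ Suc n) h y) x"
    using Suc by (intro P_cong) simp_all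
  also have "\<dots> = depart_rate + (P ^^ Suc n) h x - (P ^^ Suc (Suc n)) h x"
    by (simp add: P_add P_diff P_const)
  finally show ?case .
qed

lemma pi_mean_P_depart_P_iter:
  "pi_mean (P_depart ((P ^^ j) depart_prob))
     = depart_rate ^ 2 + pi_mean (\<lambda>x. h' x * (P ^^ j) depart_prob x)
       - pi_mean (\<lambda>x. h' x * (P ^^ Suc j) depart_prob x)"
  by (simp add: pi_mean_P_depart pi_mean_arrive_prob_mult pi_mean_P_iter depart_rate_def power2_eq_square)

lemma pi_mean_h'_P_iter_depart_prob:
  "pi_mean (\<lambda>x. h' x * (P ^^ n) depart_prob x) = depart_rate * pi_mean h' + R n - R (Suc n)"
proof -
  have "pi_mean (\<lambda>x. h' x * (P ^^ n) depart_prob x)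
      = pi_mean (\<lambda>x. depart_rate * h' x + h' x * (P ^^ n) h x - h' x * (P ^^ Suc n) h x)"
    by (rule pi_mean_cong) (simp add: P_iter_depart_prob algebra_simps)
  then show ?thesis
    by (simp add: R_def pi_mean_diff pi_mean_add pi_mean_cmult)
qed

lemma jump_exp_departures_mult_depart_prob:
  "jump_exp n (\<lambda>s. real (snd s) * depart_prob (fst s))
     = real n * depart_rate ^ 2 + pi_mean (\<lambda>x. h' x * depart_prob x) - depart_rate * pi_mean h'
       - R n + R (Suc n)"
proof -
  let ?a = "\<lambda>j. pi_mean (\<lambda>x. h' x * (P ^^ j) depart_prob x)"
  have "jump_exp n (\<lambda>s. real (snd s) * depart_prob (fst s))
      = (\<Sum>j<n. depart_rate ^ 2 + (?a j - ?a (Suc j)))"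
    by (simp add: jump_exp_departures_mult pi_mean_P_depart_P_iter add_diff_eq del: funpow.simps)
  also have "\<dots> = real n * depart_rate ^ 2 + (?a 0 - ?a n)"
    by (simp only: sum.distrib sum_lessThan_telescope'[of ?a n] sum_constant card_lessThan)
  finally show ?thesis
    by (simp add: pi_mean_h'_P_iter_depart_prob)
qed

lemma jump_exp_departures_sq:
  "jump_exp n (\<lambda>s. real (snd s) ^ 2)
     = depart_rate ^ 2 * real n * (real n - 1) + real n * \<alpha> - 2 * R 0 + 2 * R n"
proof (induction n)
  case 0
  then show ?case by (simp add: jump_exp_0 pi_mean_const)
next
  case (Suc n)
  then show ?case
    unfolding jump_exp_departures_sq_Suc jump_exp_departures_mult_depart_prob Suc.IH
    by (simp add: \<alpha>_def algebra_simps power2_eq_square)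
qed

lemma R_converges_geometrically:
  obtains C where "0 \<le> C" and "\<And>n. \<bar>R n - pi_mean h' * pi_mean h\<bar> \<le> C * \<beta> ^ n"
proof -
  obtain C where C: "0 \<le> C" "\<And>n x. x \<le> K \<Longrightarrow> \<bar>(P ^^ n) h x - pi_mean h\<bar> \<le> C * \<beta> ^ n"
    using P_iter_converges_geometrically by blast
  show ?thesis
  proof
    show "0 \<le> pi_mean (\<lambda>x. \<bar>h' x\<bar>) * C"
      using C(1) pi_mean_abs_nonneg by simp
    fix n
    have "R n - pi_mean h' * pi_mean h = pi_mean (\<lambda>x. h' x * ((P ^^ n) h x - pi_mean h))"
      by (simp add: R_def right_diff_distrib pi_mean_diff pi_mean_cmult[of "pi_mean h", symmetric] mult.commute)
    also have "\<bar>\<dots>\<bar> \<le> pi_mean (\<lambda>x. \<bar>h' x\<bar> * (C * \<beta> ^ n))"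
      using C(2) by (intro abs_pi_mean_le) (simp add: abs_mult mult_left_mono)
    finally show "\<bar>R n - pi_mean h' * pi_mean h\<bar> \<le> pi_mean (\<lambda>x. \<bar>h' x\<bar>) * C * \<beta> ^ n"
      using pi_mean_cmult[of "C * \<beta> ^ n" "\<lambda>x. \<bar>h' x\<bar>"] by (simp add: mult.commute mult.left_commute)
  qed
qed

lemma second_moment_mm1k_departures:
  assumes "0 < t"
  defines "L \<equiv> (lam + mu) * t"
  shows "integrable (mm1k_departures lam mu K t) (\<lambda>d. real d ^ 2)"
    and "measure_pmf.expectation (mm1k_departures lam mu K t) (\<lambda>d. real d ^ 2)
       = depart_rate ^ 2 * L ^ 2 + \<alpha> * L + bias
         + 2 * (\<Sum>n. pmf (poisson_pmf L) n * (R n - pi_mean h' * pi_mean h))"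
proof -
  have L: "0 < L"
    using assms lam_pos mu_pos by simp
  define S where "S = (\<Sum>n. pmf (poisson_pmf L) n * (R n - pi_mean h' * pi_mean h))"
  obtain C where "\<And>n. \<bar>R n - pi_mean h' * pi_mean h\<bar> \<le> C * \<beta> ^ n"
    using R_converges_geometrically by blast
  then have "(\<lambda>n. pmf (poisson_pmf L) n * (R n - pi_mean h' * pi_mean h)) sums S"
    unfolding S_def by (intro summable_sums poisson_mixture_geometric_bound(1)[OF L])
  then have "(\<lambda>n. depart_rate ^ 2 * (real n * (real n - 1) * pmf (poisson_pmf L) n)
           + \<alpha> * (real n * pmf (poisson_pmf L) n) + bias * pmf (poisson_pmf L) n
           + 2 * (pmf (poisson_pmf L) n * (R n - pi_mean h' * pi_mean h)))
        sums (depart_rate ^ 2 * L ^ 2 + \<alpha> * L + bias * 1 + 2 * S)"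
    by (intro sums_add sums_mult poisson_pmf_factorial_moment_sums poisson_pmf_mean_sums
        poisson_pmf_sums_1 L)
  moreover have "(\<lambda>n. depart_rate ^ 2 * (real n * (real n - 1) * pmf (poisson_pmf L) n)
           + \<alpha> * (real n * pmf (poisson_pmf L) n) + bias * pmf (poisson_pmf L) n
           + 2 * (pmf (poisson_pmf L) n * (R n - pi_mean h' * pi_mean h)))
      = (\<lambda>n. pmf (poisson_pmf L) n * jump_exp n (\<lambda>s. real (snd s) ^ 2))"
    by (simp add: fun_eq_iff jump_exp_departures_sq bias_def algebra_simps)
  ultimately have "(\<lambda>n. pmf (poisson_pmf L) n * jump_exp n (\<lambda>s. real (snd s) ^ 2))
      sums (depart_rate ^ 2 * L ^ 2 + \<alpha> * L + bias + 2 * S)"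
    by simp
  then show "integrable (mm1k_departures lam mu K t) (\<lambda>d. real d ^ 2)"
    and "measure_pmf.expectation (mm1k_departures lam mu K t) (\<lambda>d. real d ^ 2)
       = depart_rate ^ 2 * L ^ 2 + \<alpha> * L + bias + 2 * S"
    unfolding L_def by (simp_all add: expectation_mm1k_departures)
qed

lemma variance_mm1k_departures:
  assumes "0 < t"
  shows "measure_pmf.variance (mm1k_departures lam mu K t) real
     = (lam + mu) * \<alpha> * t + bias
       + 2 * (\<Sum>n. pmf (poisson_pmf ((lam + mu) * t)) n * (R n - pi_mean h' * pi_mean h))"
proof -
  have "measure_pmf.variance (mm1k_departures lam mu K t) real
      = measure_pmf.expectation (mm1k_departures lam mu K t) (\<lambda>d. real d ^ 2)
        - (measure_pmf.expectation (mm1k_departures lam mu K t) real) ^ 2"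
    by (rule measure_pmf.variance_eq[OF mean_mm1k_departures(1)[OF assms]
          second_moment_mm1k_departures(1)[OF assms]])
  also have "\<dots> = (lam + mu) * \<alpha> * t + bias
      + 2 * (\<Sum>n. pmf (poisson_pmf ((lam + mu) * t)) n * (R n - pi_mean h' * pi_mean h))"
    unfolding mean_mm1k_departures(2)[OF assms] second_moment_mm1k_departures(2)[OF assms]
    by (simp add: power2_eq_square algebra_simps)
  finally show ?thesis .
qed

lemma variance_mm1k_departures_tendsto:
  "((\<lambda>t. measure_pmf.variance (mm1k_departures lam mu K t) real - ((lam + mu) * \<alpha> * t + bias))
     \<longlongrightarrow> 0) at_top"
proof -
  obtain C where C: "\<And>n. \<bar>R n - pi_mean h' * pi_mean h\<bar> \<le> C * \<beta> ^ n"
    using R_converges_geometrically by blast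
  define k where "k = (lam + mu) * (1 - \<beta>)"
  have "0 < k"
    using lam_pos mu_pos beta_bounds by (simp add: k_def)
  have "\<forall>\<^sub>F t in at_top. norm (measure_pmf.variance (mm1k_departures lam mu K t) real
      - ((lam + mu) * \<alpha> * t + bias)) \<le> 2 * C * exp (- (k * t))"
    using eventually_gt_at_top[of 0]
  proof eventually_elim
    case (elim t)
    then have "0 < (lam + mu) * t"
      using lam_pos mu_pos by simp
    from poisson_mixture_geometric_bound(2)[OF this C]
    show ?case
      using elim by (simp add: variance_mm1k_departures k_def algebra_simps)
  qed
  moreover have "((\<lambda>t. 2 * C * exp (- (k * t))) \<longlongrightarrow> 0) at_top"
    using \<open>0 < k\<close> by real_asymp
  ultimately show ?thesis
    by (rule Lim_null_comparison)
qed

end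

section \<open>Explicit solutions for \<open>\<rho> \<noteq> 1\<close>\<close>

(* m1, m2, e1, xe, ee stand for the stationary means of x, x^2, E x, x E x and (E x)^2 below. *)
lemma mm1k_be_identity:
  fixes \<rho> r k d w m1 m2 e1 xe ee :: real
  assumes "d \<noteq> 0" "w \<noteq> 0" "d = 1 - \<rho>" "w = 1 - \<rho> * r"
    and "m1 = \<rho> * (1 - (k + 1) * r + k * \<rho> * r) / (d * w)"
    and "m2 = \<rho> * (1 + \<rho> - (k + 1)^2 * r + (2 * k^2 + 2 * k - 1) * \<rho> * r - k^2 * \<rho>^2 * r) / (d^2 * w)"
    and "e1 = (k + 1) * \<rho> * r / w"
    and "xe = \<rho> * r * k * (k + 1) / (2 * w)"
    and "ee = \<rho>^2 * r / d^2"
  shows "2 * ((\<rho> * r * m1 - e1) / w * ((m1 - e1) / w) - (\<rho> * r * m2 - (1 + \<rho> * r) * xe + ee) / w^2)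
     = \<rho> * r * ((6 * (1 + \<rho>^2) * (1 + k)^2 - 4 * \<rho> * (1 + 6 * k + 3 * k^2)) * (\<rho> * r)
         + \<rho>^2 * (2 + 3 * k + k^2) * (1 + r^2) - 2 * \<rho> * (3 + 2 * k + k^2) * (1 + \<rho>^2 * r^2)
         + k * (1 + k) * (1 + \<rho>^4 * r^2)) / (d^2 * w^4)"
  using assms(1,2) unfolding assms(5-9) by (simp add: field_simps) (use assms(3,4) in algebra)

lemma mm1k_vbar_identity:
  fixes \<rho> r k d w u c m1 e1 hm g1 :: real
  assumes "d \<noteq> 0" "w \<noteq> 0" "u \<noteq> 0" "d = 1 - \<rho>" "w = 1 - \<rho> * r" "u = 1 + \<rho>"
    and "c = \<rho> * (1 - r) / (u * w)"
    and "m1 = \<rho> * (1 - (k + 1) * r + k * \<rho> * r) / (d * w)"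
    and "e1 = (k + 1) * \<rho> * r / w"
    and "hm = (\<rho> * r * m1 - e1) / w"
    and "g1 = 1 / u * (hm + \<rho> * r / w^2)"
  shows "u * (c + 2 * g1 - 2 * c * hm) = \<rho> * ((1 + \<rho> * r) * (1 - (1 + 2 * k) * r * d - \<rho> * r^2)) / w^3"
  using assms(1-3) unfolding assms(11,10,7-9) by (simp add: field_simps) (use assms(4-6) in algebra)

locale mm1k_rho_ne_1 = mm1k +
  assumes rho_ne_1: "\<rho> \<noteq> 1"
begin

definition "r = \<rho> ^ K"
definition "D = 1 - \<rho>"
definition "W = 1 - \<rho> * r"

(* (1 / rho) ^ x is harmonic for P away from the boundary (P_inverse_power), where x has constant
   drift; the combinations sol_h and sol_h' of x and E x then satisfy the Poisson equations, and the
   factor in E makes pi x * E x constant. *)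
definition E :: "nat \<Rightarrow> real" where
  "E x = \<rho> * r / D * (1 / \<rho>) ^ x"

definition sol_h :: "nat \<Rightarrow> real" where
  "sol_h x = (real x - E x) / W"

definition sol_h' :: "nat \<Rightarrow> real" where
  "sol_h' x = (\<rho> * r * real x - E x) / W"

lemma D_ne_0: "D \<noteq> 0"
  using rho_ne_1 by (simp add: D_def)

lemma W_eq: "W = D * (\<Sum>i\<le>K. \<rho> ^ i)"
  unfolding W_def D_def r_def
  by (simp only: power_Suc[symmetric] one_diff_power_eq lessThan_Suc_atMost)

lemma W_ne_0: "W \<noteq> 0"
proof -
  have "0 < (\<Sum>i\<le>K. \<rho> ^ i)"
    using rho_pos by (intro sum_pos) auto
  then show ?thesis
    using D_ne_0 by (simp add: W_eq)
qed

lemma pi_eq_rho_ne_1: "x \<le> K \<Longrightarrow> \<pi> x = D / W * \<rho> ^ x"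
  using D_ne_0 by (simp add: pi_eq W_eq)

lemma pi_mult_E: "x \<le> K \<Longrightarrow> \<pi> x * E x = \<rho> * r / W"
  using D_ne_0 rho_pos by (simp add: pi_eq_rho_ne_1 E_def power_one_over field_simps)

lemma depart_rate_rho_ne_1: "depart_rate = q * \<rho> * (1 - r) / W"
  using W_ne_0 by (simp add: depart_rate_eq pi_eq_rho_ne_1 W_def D_def field_simps)

lemma E_minus_P_E:
  assumes "x \<le> K"
  shows "E x - P E x = \<rho> * q * (of_bool (x = K) - r * of_bool (x = 0))"
proof -
  let ?i = "of_bool (x = K) - of_bool (x = 0) :: real"
  have PE: "P E x = \<rho> * r / D * ((1 / \<rho>) ^ x * (1 + (p - q) * ?i))"
    by (simp only: E_def[abs_def] P_cmult P_inverse_power[OF assms])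
  have q_minus_p: "- (p - q) = q * D"
    by (simp add: p_eq_rho_q D_def algebra_simps)
  have "E x - P E x = \<rho> * r / D * (1 / \<rho>) ^ x * (- (p - q)) * ?i"
    unfolding PE E_def by algebra
  also have "\<dots> = \<rho> * q * (r * (1 / \<rho>) ^ x * ?i)"
    unfolding q_minus_p using D_ne_0 by (simp add: field_simps)
  also have "r * (1 / \<rho>) ^ x * ?i = of_bool (x = K) - r * of_bool (x = 0)"
    using rho_pos K_pos by (auto simp: r_def power_one_over)
  finally show ?thesis .
qed

lemma poisson_sol_h:
  assumes "x \<le> K"
  shows "sol_h x - P sol_h x = depart_prob x - depart_rate"
proof -
  have "sol_h x - P sol_h x = ((real x - P real x) - (E x - P E x)) / W"
    by (simp add: sol_h_def[abs_def] P_divide P_diff diff_divide_distrib)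
  also have "\<dots> = (q * (1 - of_bool (x = 0)) - \<rho> * q * (1 - of_bool (x = K))
      - \<rho> * q * (of_bool (x = K) - r * of_bool (x = 0))) / W"
    using assms by (simp add: P_of_nat E_minus_P_E depart_prob_eq arrive_prob_eq p_eq_rho_q)
  also have "\<dots> = depart_prob x - depart_rate"
    using W_ne_0 by (simp add: depart_prob_eq depart_rate_rho_ne_1 field_simps) (simp add: W_def algebra_simps)
  finally show ?thesis .
qed

lemma poisson_sol_h':
  assumes "x \<le> K"
  shows "sol_h' x - P sol_h' x = arrive_prob x - depart_rate"
proof -
  have "sol_h' x - P sol_h' x = (\<rho> * r * (real x - P real x) - (E x - P E x)) / W"
    by (simp only: sol_h'_def[abs_def] P_divide P_diff P_cmult) algebra
  also have "\<dots> = (\<rho> * r * (q * (1 - of_bool (x = 0)) - \<rho> * q * (1 - of_bool (x = K)))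
      - \<rho> * q * (of_bool (x = K) - r * of_bool (x = 0))) / W"
    using assms by (simp add: P_of_nat E_minus_P_E depart_prob_eq arrive_prob_eq p_eq_rho_q)
  also have "\<dots> = arrive_prob x - depart_rate"
    using W_ne_0 assms
    by (simp add: arrive_prob_eq p_eq_rho_q depart_rate_rho_ne_1 field_simps) (simp add: W_def algebra_simps)
  finally show ?thesis .
qed

lemma pi_mean_rho_ne_1: "pi_mean f = D / W * (\<Sum>x\<le>K. \<rho> ^ x * f x)"
  by (simp add: pi_mean_def pi_eq_rho_ne_1 sum_distrib_left mult.assoc)

lemma pi_mean_of_nat: "pi_mean real = \<rho> * (1 - (real K + 1) * r + real K * \<rho> * r) / (D * W)"
proof -
  have "D ^ 2 * (\<Sum>x\<le>K. \<rho> ^ x * real x) = \<rho> * (1 - (real K + 1) * r + real K * \<rho> * r)"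
    using sum_atMost_mult_power[of \<rho> K] by (simp add: D_def r_def power_add mult.commute algebra_simps)
  then show ?thesis
    using D_ne_0 W_ne_0 by (simp add: pi_mean_rho_ne_1 field_simps power2_eq_square)
qed

lemma pi_mean_power2:
  "pi_mean (\<lambda>x. real x ^ 2) = \<rho> * (1 + \<rho> - (real K + 1) ^ 2 * r + (2 * real K ^ 2 + 2 * real K - 1) * \<rho> * r
     - real K ^ 2 * \<rho> ^ 2 * r) / (D ^ 2 * W)"
proof -
  have "D ^ 3 * (\<Sum>x\<le>K. \<rho> ^ x * real x ^ 2) = \<rho> * (1 + \<rho> - (real K + 1) ^ 2 * r
      + (2 * real K ^ 2 + 2 * real K - 1) * \<rho> * r - real K ^ 2 * \<rho> ^ 2 * r)"
    using sum_atMost_power2_mult_power[of \<rho> K]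
    by (simp add: D_def r_def power_add mult.commute power2_eq_square power3_eq_cube algebra_simps)
  then show ?thesis
    using D_ne_0 W_ne_0 by (simp add: pi_mean_rho_ne_1 field_simps power2_eq_square power3_eq_cube)
qed

lemma pi_mean_E: "pi_mean E = (real K + 1) * \<rho> * r / W"
  by (simp add: pi_mean_def pi_mult_E)

lemma pi_mean_of_nat_mult_E: "pi_mean (\<lambda>x. real x * E x) = \<rho> * r * real K * (real K + 1) / (2 * W)"
proof -
  have "pi_mean (\<lambda>x. real x * E x) = (\<Sum>x\<le>K. \<rho> * r / W * real x)"
    unfolding pi_mean_def by (intro sum.cong refl) (simp add: pi_mult_E[symmetric] algebra_simps)
  also have "\<dots> = \<rho> * r / W * (\<Sum>x\<le>K. real x)"
    by (rule sum_distrib_left[symmetric])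
  finally show ?thesis
    by (simp add: sum_atMost_of_nat)
qed

lemma r_mult_sum_inverse_powers: "r * (\<Sum>x\<le>K. (1 / \<rho>) ^ x) = W / D"
proof -
  have "r * (\<Sum>x\<le>K. (1 / \<rho>) ^ x) = (\<Sum>x\<le>K. \<rho> ^ (K - x))"
    unfolding sum_distrib_left using rho_pos
    by (intro sum.cong refl) (simp add: r_def power_diff power_one_over)
  also have "\<dots> = (\<Sum>i\<le>K. \<rho> ^ i)"
    using sum.nat_diff_reindex[of "\<lambda>i. \<rho> ^ i" "Suc K"] by (simp add: lessThan_Suc_atMost)
  finally show ?thesis
    using D_ne_0 by (simp add: W_eq)
qed

lemma pi_mean_E_power2: "pi_mean (\<lambda>x. E x ^ 2) = \<rho> ^ 2 * r / D ^ 2"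
proof -
  have "pi_mean (\<lambda>x. E x ^ 2) = (\<Sum>x\<le>K. \<rho> * r / W * E x)"
    unfolding pi_mean_def by (intro sum.cong refl) (simp add: pi_mult_E[symmetric] power2_eq_square)
  also have "\<dots> = \<rho> * r / W * (\<rho> * r / D) * (\<Sum>x\<le>K. (1 / \<rho>) ^ x)"
    by (simp add: E_def sum_distrib_left mult.assoc)
  also have "\<dots> = \<rho> ^ 2 * r / (W * D) * (r * (\<Sum>x\<le>K. (1 / \<rho>) ^ x))"
    by (simp add: power2_eq_square)
  finally show ?thesis
    using D_ne_0 W_ne_0 by (simp add: r_mult_sum_inverse_powers power2_eq_square)
qed

sublocale rho_ne_1: mm1k_poisson lam mu K sol_h sol_h'
  by unfold_locales (simp_all add: poisson_sol_h poisson_sol_h')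

lemma rho_powers:
  "\<rho> ^ K = r" "\<rho> ^ (K + 1) = \<rho> * r" "\<rho> ^ (2 * K) = r ^ 2" "\<rho> ^ (2 * K + 1) = \<rho> * r ^ 2"
  "\<rho> ^ (2 * (K + 1)) = \<rho> ^ 2 * r ^ 2" "\<rho> ^ (2 * (K + 2)) = \<rho> ^ 4 * r ^ 2"
proof -
  have sq: "\<rho> ^ (2 * n) = (\<rho> ^ n) ^ 2" for n
    by (simp add: power_mult[symmetric] mult.commute)
  show "\<rho> ^ K = r" "\<rho> ^ (K + 1) = \<rho> * r" "\<rho> ^ (2 * K) = r ^ 2" "\<rho> ^ (2 * K + 1) = \<rho> * r ^ 2"
    by (simp_all add: r_def sq)
  show "\<rho> ^ (2 * (K + 1)) = \<rho> ^ 2 * r ^ 2" "\<rho> ^ (2 * (K + 2)) = \<rho> ^ 4 * r ^ 2"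
    unfolding sq by (simp_all add: r_def power_add power_mult_distrib flip: power_mult)
qed

lemma pi_mean_sol_h: "pi_mean sol_h = (pi_mean real - pi_mean E) / W"
  by (simp add: sol_h_def[abs_def] pi_mean_divide pi_mean_diff)

lemma pi_mean_sol_h': "pi_mean sol_h' = (\<rho> * r * pi_mean real - pi_mean E) / W"
  by (simp add: sol_h'_def[abs_def] pi_mean_divide pi_mean_diff pi_mean_cmult)

lemma pi_mean_sol_h'_mult_sol_h:
  "pi_mean (\<lambda>x. sol_h' x * sol_h x)
     = (\<rho> * r * pi_mean (\<lambda>x. real x ^ 2) - (1 + \<rho> * r) * pi_mean (\<lambda>x. real x * E x)
        + pi_mean (\<lambda>x. E x ^ 2)) / W ^ 2"
proof -
  have "pi_mean (\<lambda>x. sol_h' x * sol_h x) = pi_mean (\<lambda>x. (\<rho> * r * real x ^ 2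
      - (1 + \<rho> * r) * (real x * E x) + E x ^ 2) / W ^ 2)"
    using W_ne_0 by (intro pi_mean_cong) (simp add: sol_h'_def sol_h_def power2_eq_square field_simps)
  then show ?thesis
    by (simp only: pi_mean_divide pi_mean_add pi_mean_diff pi_mean_cmult)
qed

lemma bias_rho_ne_1: "rho_ne_1.bias = mm1k_be lam mu K"
proof -
  have "rho_ne_1.bias = 2 * ((\<rho> * r * pi_mean real - pi_mean E) / W * ((pi_mean real - pi_mean E) / W)
      - (\<rho> * r * pi_mean (\<lambda>x. real x ^ 2) - (1 + \<rho> * r) * pi_mean (\<lambda>x. real x * E x)
         + pi_mean (\<lambda>x. E x ^ 2)) / W ^ 2)"
    by (simp add: rho_ne_1.bias_def rho_ne_1.R_def pi_mean_sol_h pi_mean_sol_h' pi_mean_sol_h'_mult_sol_h)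
  also have "\<dots> = \<rho> * r * ((6 * (1 + \<rho>^2) * (1 + real K)^2
           - 4 * \<rho> * (1 + 6 * real K + 3 * real K^2)) * (\<rho> * r)
         + \<rho>^2 * (2 + 3 * real K + real K^2) * (1 + r^2)
         - 2 * \<rho> * (3 + 2 * real K + real K^2) * (1 + \<rho>^2 * r^2)
         + real K * (1 + real K) * (1 + \<rho>^4 * r^2)) / (D^2 * W^4)"
    by (rule mm1k_be_identity[OF D_ne_0 W_ne_0 D_def W_def pi_mean_of_nat pi_mean_power2 pi_mean_E
          pi_mean_of_nat_mult_E pi_mean_E_power2])
  also have "\<dots> = mm1k_be lam mu K"
    unfolding mm1k_be_def mm1k_N_def Let_def \<rho>_def[symmetric] if_P[OF rho_ne_1] rho_powers D_def W_def
    by (rule refl)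
  finally show ?thesis .
qed

lemma pi_mean_sol_h'_mult_depart_prob:
  "pi_mean (\<lambda>x. sol_h' x * depart_prob x) = q * (pi_mean sol_h' + \<rho> * r / W ^ 2)"
proof -
  have "\<pi> 0 * sol_h' 0 = - \<rho> * r / W ^ 2"
    using D_ne_0 W_ne_0 by (simp add: pi_eq_rho_ne_1 sol_h'_def E_def power2_eq_square)
  then show ?thesis
    by (simp add: pi_mean_mult_depart_prob)
qed

lemma vbar_rho_ne_1: "(lam + mu) * rho_ne_1.\<alpha> = mm1k_vbar lam mu K"
proof -
  have "(lam + mu) * rho_ne_1.\<alpha> = mu * ((1 + \<rho>) * (depart_rate + 2 * pi_mean (\<lambda>x. sol_h' x * depart_prob x)
      - 2 * depart_rate * pi_mean sol_h'))"
    by (simp add: rho_ne_1.\<alpha>_def lam_plus_mu_eq)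
  also have "\<dots> = mu * (\<rho> * ((1 + \<rho> * r) * (1 - (1 + 2 * real K) * r * D - \<rho> * r^2)) / W^3)"
    using rho_pos
    by (subst mm1k_vbar_identity[OF D_ne_0 W_ne_0 _ D_def W_def refl _ pi_mean_of_nat pi_mean_E
          pi_mean_sol_h' pi_mean_sol_h'_mult_depart_prob[unfolded q_eq]])
      (simp_all add: depart_rate_rho_ne_1 q_eq)
  also have "\<dots> = lam * ((1 + \<rho> * r) * (1 - (1 + 2 * real K) * r * D - \<rho> * r^2)) / W^3"
    using mu_pos by (simp add: \<rho>_def)
  also have "\<dots> = mm1k_vbar lam mu K"
    unfolding mm1k_vbar_def Let_def \<rho>_def[symmetric] if_P[OF rho_ne_1] rho_powers D_def W_def
    by (simp only: mult.assoc)
  finally show ?thesis .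
qed

end

section \<open>Explicit solutions for \<open>\<rho> = 1\<close>\<close>

(* s1, ..., s4 stand for the power sums of x over {..K}, and a x + b x^2 is sol_h below. *)
lemma mm1k_be_identity_rho_eq_1:
  fixes k u a b s1 s2 s3 s4 :: real
  assumes "u \<noteq> 0" "u = k + 1" "a = (2 * k + 1) / (2 * u)" "b = - 1 / (2 * u)"
    and "s1 = k * u / 2" "s2 = k * u * (2 * k + 1) / 6" "s3 = (k * u / 2) ^ 2"
    and "s4 = k * u * (2 * k + 1) * (3 * k ^ 2 + 3 * k - 1) / 30"
  shows "2 * ((b * s1 + b * s2) / u * ((a * s1 + b * s2) / u)
      - (b * a * s2 + (b * a + b * b) * s3 + b * b * s4) / u)
     = (7 * k ^ 4 + 28 * k ^ 3 + 37 * k ^ 2 + 18 * k) / (180 * u ^ 2)"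
  using assms(1) unfolding assms(3-8) by (simp add: field_simps) (use assms(2) in algebra)

lemma mm1k_vbar_identity_rho_eq_1:
  fixes k u b c s1 s2 :: real
  assumes "u \<noteq> 0" "u = k + 1" "b = - 1 / (2 * u)" "c = k / (2 * u)"
    and "s1 = k * u / 2" "s2 = k * u * (2 * k + 1) / 6"
  shows "2 * (c + (1 - 2 * c) * ((b * s1 + b * s2) / u)) = 2 / 3 - (3 * k + 2) / (3 * u ^ 2)"
  using assms(1) unfolding assms(3-6) by (simp add: field_simps) (use assms(2) in algebra)

locale mm1k_rho_eq_1 = mm1k +
  assumes rho_eq_1: "\<rho> = 1"
begin

(* With p = q, x is harmonic for P and x^2 has drift 1 away from the boundary. *)
definition sol_h :: "nat \<Rightarrow> real" where
  "sol_h x = ((2 * real K + 1) * real x - real x ^ 2) / (2 * (real K + 1))"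

definition sol_h' :: "nat \<Rightarrow> real" where
  "sol_h' x = - (real x + real x ^ 2) / (2 * (real K + 1))"

lemma p_eq_half: "p = 1 / 2" and q_eq_half: "q = 1 / 2"
  using rho_eq_1 by (simp_all add: p_eq q_eq)

lemma pi_eq_rho_eq_1: "x \<le> K \<Longrightarrow> \<pi> x = 1 / (real K + 1)"
  using rho_eq_1 by (simp add: pi_eq)

lemma depart_rate_rho_eq_1: "depart_rate = real K / (2 * (real K + 1))"
  by (simp add: depart_rate_eq pi_eq_rho_eq_1 q_eq_half field_simps)

lemma poisson_sol_h:
  assumes "x \<le> K"
  shows "sol_h x - P sol_h x = depart_prob x - depart_rate"
proof -
  have "sol_h x - P sol_h x = ((2 * real K + 1) * (real x - P real x)
      - (real x ^ 2 - P (\<lambda>y. real y ^ 2) x)) / (2 * (real K + 1))"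
    by (simp only: sol_h_def[abs_def] P_divide P_diff P_cmult) algebra
  also have "\<dots> = ((2 * real K + 2 - 2 * real x) * depart_prob x + (2 * real x - 2 * real K) * arrive_prob x)
      / (2 * (real K + 1))"
    by (simp add: P_of_nat P_power2 algebra_simps)
  also have "\<dots> = depart_prob x - depart_rate"
    using assms K_pos
    by (cases "x = 0"; cases "x = K")
      (auto simp: depart_prob_def arrive_prob_def depart_rate_rho_eq_1 p_eq_half q_eq_half field_simps)
  finally show ?thesis .
qed

lemma poisson_sol_h':
  assumes "x \<le> K"
  shows "sol_h' x - P sol_h' x = arrive_prob x - depart_rate"
proof -
  have "sol_h' x - P sol_h' x = - ((real x - P real x) + (real x ^ 2 - P (\<lambda>y. real y ^ 2) x))
      / (2 * (real K + 1))"
    by (simp only: sol_h'_def[abs_def] P_divide P_add P_minus) algebra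
  also have "\<dots> = ((2 * real x + 2) * arrive_prob x - 2 * real x * depart_prob x) / (2 * (real K + 1))"
    by (simp add: P_of_nat P_power2 algebra_simps)
  also have "\<dots> = arrive_prob x - depart_rate"
    using assms K_pos
    by (cases "x = 0"; cases "x = K")
      (auto simp: depart_prob_def arrive_prob_def depart_rate_rho_eq_1 p_eq_half q_eq_half field_simps)
  finally show ?thesis .
qed

sublocale rho_eq_1: mm1k_poisson lam mu K sol_h sol_h'
  by unfold_locales (simp_all add: poisson_sol_h poisson_sol_h')

lemma pi_mean_rho_eq_1: "pi_mean f = (\<Sum>x\<le>K. f x) / (real K + 1)"
  by (simp add: pi_mean_def pi_eq_rho_eq_1 sum_divide_distrib)

lemma sol_h_poly:
  "sol_h = (\<lambda>x. (2 * real K + 1) / (2 * (real K + 1)) * real x + - 1 / (2 * (real K + 1)) * real x ^ 2)"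
  by (rule ext, simp only: sol_h_def) algebra

lemma sol_h'_poly:
  "sol_h' = (\<lambda>x. - 1 / (2 * (real K + 1)) * real x + - 1 / (2 * (real K + 1)) * real x ^ 2)"
  by (rule ext, simp only: sol_h'_def) algebra

lemma bias_rho_eq_1: "rho_eq_1.bias = mm1k_be lam mu K"
proof -
  define a where "a = (2 * real K + 1) / (2 * (real K + 1))"
  define b where "b = - 1 / (2 * (real K + 1))"
  have pointwise: "sol_h' x * sol_h x = b * a * real x ^ 2 + (b * a + b * b) * real x ^ 3 + b * b * real x ^ 4"
    for x
    unfolding sol_h_poly sol_h'_poly a_def[symmetric] b_def[symmetric] by algebra
  have "rho_eq_1.bias = 2 * (pi_mean sol_h' * pi_mean sol_h - pi_mean (\<lambda>x. sol_h' x * sol_h x))"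
    by (simp add: rho_eq_1.bias_def rho_eq_1.R_def)
  also have "\<dots> = 2 * ((b * (\<Sum>x\<le>K. real x) + b * (\<Sum>x\<le>K. real x ^ 2)) / (real K + 1)
      * ((a * (\<Sum>x\<le>K. real x) + b * (\<Sum>x\<le>K. real x ^ 2)) / (real K + 1))
      - (b * a * (\<Sum>x\<le>K. real x ^ 2) + (b * a + b * b) * (\<Sum>x\<le>K. real x ^ 3)
         + b * b * (\<Sum>x\<le>K. real x ^ 4)) / (real K + 1))"
    unfolding pointwise
    unfolding pi_mean_rho_eq_1 sol_h_poly sol_h'_poly a_def[symmetric] b_def[symmetric]
    by (simp only: sum.distrib sum_distrib_left[symmetric])
  also have "\<dots> = (7 * real K ^ 4 + 28 * real K ^ 3 + 37 * real K ^ 2 + 18 * real K) / (180 * (real K + 1) ^ 2)"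
    by (rule mm1k_be_identity_rho_eq_1[OF _ refl a_def b_def sum_atMost_of_nat sum_atMost_power2
          sum_atMost_power3 sum_atMost_power4]) simp
  also have "\<dots> = mm1k_be lam mu K"
    using rho_eq_1 by (simp add: mm1k_be_def \<rho>_def[symmetric])
  finally show ?thesis .
qed

lemma vbar_rho_eq_1: "(lam + mu) * rho_eq_1.\<alpha> = mm1k_vbar lam mu K"
proof -
  have lam_plus_mu: "lam + mu = 2 * lam"
    using rho_eq_1 mu_pos by (simp add: \<rho>_def)
  have "sol_h' 0 = 0"
    by (simp add: sol_h'_def)
  then have "pi_mean (\<lambda>x. sol_h' x * depart_prob x) = pi_mean sol_h' / 2"
    by (simp add: pi_mean_mult_depart_prob q_eq_half)
  then have "rho_eq_1.\<alpha> = depart_rate + (1 - 2 * depart_rate) * pi_mean sol_h'"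
    by (simp add: rho_eq_1.\<alpha>_def algebra_simps)
  then have "(lam + mu) * rho_eq_1.\<alpha> = lam * (2 * (depart_rate + (1 - 2 * depart_rate) * pi_mean sol_h'))"
    unfolding lam_plus_mu by (simp only: mult_ac)
  also have "pi_mean sol_h' = (- 1 / (2 * (real K + 1)) * (\<Sum>x\<le>K. real x)
      + - 1 / (2 * (real K + 1)) * (\<Sum>x\<le>K. real x ^ 2)) / (real K + 1)"
    unfolding pi_mean_rho_eq_1 sol_h'_poly by (simp only: sum.distrib sum_distrib_left[symmetric])
  also have "lam * (2 * (depart_rate + (1 - 2 * depart_rate) * \<dots>))
      = lam * (2 / 3 - (3 * real K + 2) / (3 * (real K + 1) ^ 2))"
    using mm1k_vbar_identity_rho_eq_1[of "real K + 1", OF _ refl refl depart_rate_rho_eq_1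
        sum_atMost_of_nat sum_atMost_power2] by simp
  also have "\<dots> = mm1k_vbar lam mu K"
    using rho_eq_1 by (simp add: mm1k_vbar_def \<rho>_def[symmetric])
  finally show ?thesis .
qed

end

theorem proposition1:
  fixes lam mu :: real and K :: nat
  assumes "0 < lam" and "0 < mu" and "1 \<le> K"
  shows "((\<lambda>t. measure_pmf.variance (mm1k_departures lam mu K t) real
               - (mm1k_vbar lam mu K * t + mm1k_be lam mu K)) \<longlongrightarrow> 0) at_top"
proof -
  interpret mm1k lam mu K
    using assms by unfold_locales
  show ?thesis
  proof (cases "\<rho> = 1")
    case True
    interpret mm1k_rho_eq_1 lam mu K
      by unfold_locales (fact True)
    show ?thesis
      using rho_eq_1.variance_mm1k_departures_tendsto by (simp only: vbar_rho_eq_1 bias_rho_eq_1)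
  next
    case False
    interpret mm1k_rho_ne_1 lam mu K
      by unfold_locales (fact False)
    show ?thesis
      using rho_ne_1.variance_mm1k_departures_tendsto by (simp only: vbar_rho_ne_1 bias_rho_ne_1)
  qed
qed

end
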